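(* Let $a\in(0,\frac23]$ and $f\in U_+$. For $x\in\mathbb R$ let $X^x_0=x$, $X^x_{n+1}=aX^x_n+\xi_{n+1}$, all driven by the same sequence $(\xi_n)$, and $\tau_x=\inf\{n\ge0:X^x_n<0\}$. Then for any $x,y\in[0,\frac1{1-a}]$ with $f(x)=f(y)$ we have $\tau_x=\tau_y$ and \[ f(X^x_{n\wedge\tau_x})=f(X^y_{n\wedge\tau_y})\quad\text{for all } n\ge1. \]
   Context: Let $p\in(0,1)$, $q=1-p$, and let $\xi_1,\xi_2,\dots$ be i.i.d. with $\mathbb P(\xi_1=1)=p$, $\mathbb P(\xi_1=-1)=q$. For $a\in(0,1)$ define $T_a$ by $T_a(x)=\frac1a(x+1)$ if $0\le x<1$ and $x\le\frac{2a-1}{1-a}$, and $T_a(x)=\frac1a(x-1)$ if $1\le x\le\frac1{1-a}$. Let $I_a=\big(\frac{2a-1}{1-a},1\big)$ and $\varkappa_a=\inf\{k\ge0:T_a^k(0)\in I_a\}$ ($\inf\emptyset=\infty$); the points $T_a^k(0)$ are defined for $0\le k\le\varkappa_a$. Let $U_+$ be the set of functions $f:\mathbb R\to\mathbb R$ of the form $f(x)=\sum_{k=0}^{\varkappa_a}u_k\mathbb 1\{x\ge T_a^k(0)\}$ with all $u_k>0$ and $\sum_k u_k<\infty$. *)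

theory Defs
  imports "HOL-Analysis.Analysis" "HOL-Library.Extended_Nat"
begin

definition Tmap :: "real \<Rightarrow> real \<Rightarrow> real" where
  "Tmap a x =
     (if 0 \<le> x \<and> x < 1 \<and> x \<le> (2*a - 1)/(1 - a) then (x + 1)/a
      else if 1 \<le> x \<and> x \<le> 1/(1 - a) then (x - 1)/a
      else undefined)"

definition orb :: "real \<Rightarrow> nat \<Rightarrow> real" where
  "orb a k = (Tmap a ^^ k) 0"

definition Iint :: "real \<Rightarrow> real set" where
  "Iint a = {(2*a - 1)/(1 - a) <..< 1}"

text \<open>The index set {k. 0 \<le> k \<le> kappa_a}: k \<le> kappa_a iff T_a^j(0) \<notin> I_a for all j < k.\<close>
definition Kset :: "real \<Rightarrow> nat set" where
  "Kset a = {k. \<forall>j<k. orb a j \<notin> Iint a}"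

definition Uplus :: "real \<Rightarrow> (real \<Rightarrow> real) set" where
  "Uplus a = {f. \<exists>u :: nat \<Rightarrow> real.
      (\<forall>k\<in>Kset a. u k > 0) \<and> u summable_on Kset a \<and>
      (\<forall>x. f x = (\<Sum>\<^sub>\<infinity>k\<in>Kset a. if x \<ge> orb a k then u k else 0))}"

text \<open>The chain X^x_n driven by the sequence xi (xi 0 unused; xi_1, xi_2, ... are xi 1, xi 2, ...).\<close>
primrec chain :: "real \<Rightarrow> (nat \<Rightarrow> real) \<Rightarrow> real \<Rightarrow> nat \<Rightarrow> real" where
  "chain a xi x 0 = x"
| "chain a xi x (Suc n) = a * chain a xi x n + xi (Suc n)"

definition hit_time :: "(nat \<Rightarrow> real) \<Rightarrow> enat" where
  "hit_time X = (if \<exists>n. X n < 0 then enat (LEAST n. X n < 0) else \<infinity>)"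

definition stopped :: "(nat \<Rightarrow> real) \<Rightarrow> nat \<Rightarrow> real" where
  "stopped X n = X (the_enat (min (enat n) (hit_time X)))"

end

theory Submission
  imports Defs
begin

text \<open>
  Every \<open>f \<in> U\<^sub>+\<close> is a step function with a positive jump at each orbit point
  \<open>T\<^sub>a\<^sup>k(0)\<close>, \<open>k \<le> \<kappa>\<^sub>a\<close>, so \<open>f x = f y\<close> says exactly that no orbit point separates
  \<open>x\<close> and \<open>y\<close>. On \<open>[0, 1/(1-a)]\<close> this relation is invariant under both maps
  \<open>x \<mapsto> a x \<plusminus> 1\<close>: an orbit point \<open>d\<close> separating \<open>a x + 1\<close> from \<open>a y + 1\<close> must exceed 1,
  and then \<open>T\<^sub>a d = (d - 1)/a\<close> is an orbit point separating \<open>x\<close> from \<open>y\<close>; likewise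
  for \<open>a x - 1\<close> with \<open>T\<^sub>a d = (d + 1)/a\<close>, where \<open>a \<le> 2/3\<close> forces
  \<open>d \<le> (2a - 1)/(1 - a) \<le> 1\<close>, i.e. \<open>d\<close> lies on the left branch of \<open>T\<^sub>a\<close>. The boundary
  value \<open>d = 1\<close> (possible only for \<open>a = 2/3\<close>) never occurs, because \<open>T\<^bsub>2/3\<^esub>\<^sup>k(0)\<close> is an
  odd multiple of \<open>2\<^sup>-\<^sup>k\<close> for \<open>k \<ge> 1\<close>. Since 0 is itself an orbit point, related points have the same
  sign, so the two chains stay related up to their common exit time from \<open>[0,\<infinity>)\<close>.
\<close>

lemma orb_0 [simp]: "orb a 0 = 0"
  by (simp add: orb_def)

lemma orb_Suc: "orb a (Suc k) = Tmap a (orb a k)"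
  by (simp add: orb_def)

lemma Tmap_left_branch: "0 \<le> d \<Longrightarrow> d < 1 \<Longrightarrow> d \<le> (2*a - 1)/(1 - a) \<Longrightarrow> Tmap a d = (d + 1)/a"
  by (simp add: Tmap_def)

lemma Tmap_right_branch: "1 \<le> d \<Longrightarrow> d \<le> 1/(1 - a) \<Longrightarrow> Tmap a d = (d - 1)/a"
  by (simp add: Tmap_def)

lemma Kset_0 [simp]: "0 \<in> Kset a"
  by (simp add: Kset_def)

lemma Kset_Suc: "Suc k \<in> Kset a \<longleftrightarrow> k \<in> Kset a \<and> orb a k \<notin> Iint a"
  by (auto simp: Kset_def less_Suc_eq)

lemma Kset_two_thirds: "Kset (2/3) = UNIV"
  by (simp add: Kset_def Iint_def)

lemma orb_bounds:
  assumes "0 < a" "a < 1" "k \<in> Kset a"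
  shows "0 \<le> orb a k \<and> orb a k \<le> 1/(1 - a)"
  using assms(3)
proof (induction k)
  case (Suc k)
  let ?d = "orb a k"
  have "?d \<notin> Iint a" and bounds: "0 \<le> ?d" "?d \<le> 1/(1 - a)"
    using Suc by (auto simp: Kset_Suc)
  have bound_eq: "a/(1 - a) / a = 1/(1 - a)"
    using assms by simp
  show ?case
  proof (cases "?d < 1")
    case True
    with \<open>?d \<notin> Iint a\<close> have "?d \<le> (2*a - 1)/(1 - a)"
      by (auto simp: Iint_def)
    moreover have "(2*a - 1)/(1 - a) + 1 = a/(1 - a)"
      using assms by (simp add: field_simps)
    ultimately have "(?d + 1)/a \<le> a/(1 - a) / a"
      using assms by (intro divide_right_mono) auto
    with True bounds \<open>?d \<le> (2*a - 1)/(1 - a)\<close> show ?thesis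
      using assms by (simp add: orb_Suc Tmap_left_branch bound_eq)
  next
    case False
    have "1/(1 - a) - 1 = a/(1 - a)"
      using assms by (simp add: field_simps)
    with bounds have "(?d - 1)/a \<le> a/(1 - a) / a"
      using assms by (intro divide_right_mono) auto
    with False bounds show ?thesis
      using assms by (simp add: orb_Suc Tmap_right_branch bound_eq)
  qed
qed (use assms in simp)

lemma orb_two_thirds_odd_numerator:
  "k \<ge> 1 \<Longrightarrow> \<exists>m::int. odd m \<and> orb (2/3) k * 2^k = of_int m"
proof (induction k rule: nat_induct_at_least)
  case base
  have "orb (2/3) 1 = 3/2"
    by (simp add: orb_Suc Tmap_def)
  then show ?case
    by (intro exI[of _ 3]) simp
next
  case (Suc k)
  let ?d = "orb (2/3) k"
  obtain m where m: "odd m" "?d * 2^k = of_int m"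
    using Suc.IH by blast
  have bounds: "0 \<le> ?d" "?d \<le> 3"
    using orb_bounds[of "2/3" k] by (auto simp: Kset_two_thirds)
  obtain s :: int where succ: "2 * orb (2/3) (Suc k) = 3 * (?d + s)"
  proof (cases "?d < 1")
    case True
    with bounds show ?thesis
      by (intro that[of 1]) (simp add: orb_Suc Tmap_left_branch)
  next
    case False
    with bounds show ?thesis
      by (intro that[of "-1"]) (simp add: orb_Suc Tmap_right_branch)
  qed
  have "orb (2/3) (Suc k) * 2^Suc k = 2 * orb (2/3) (Suc k) * 2^k"
    by (simp add: mult_ac)
  also have "\<dots> = 3 * (?d * 2^k + s * 2^k)"
    unfolding succ by (simp add: algebra_simps)
  also have "\<dots> = of_int (3 * (m + s * 2^k))"
    unfolding m(2) by simp
  finally have "orb (2/3) (Suc k) * 2^Suc k = of_int (3 * (m + s * 2^k))" .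
  moreover have "odd (3 * (m + s * 2^k))"
  proof -
    obtain j where "k = Suc j"
      using \<open>k \<ge> 1\<close> by (cases k) auto
    then have "odd (m + s * 2^k)"
      using m(1) by simp
    moreover have "odd (3::int)"
      by simp
    ultimately show ?thesis
      using even_mult_iff by blast
  qed
  ultimately show ?case
    by (intro exI[of _ "3 * (m + s * 2^k)"] conjI)
qed

lemma orb_two_thirds_ne_1: "orb (2/3) k \<noteq> 1"
proof
  assume one: "orb (2/3) k = 1"
  then have "k \<ge> 1"
    by (cases k) auto
  then obtain m :: int where "odd m" "orb (2/3) k * 2^k = of_int m"
    using orb_two_thirds_odd_numerator by blast
  with one have "odd ((2::int)^k)"
    by (metis mult_1 of_int_eq_iff of_int_numeral of_int_power)
  with \<open>k \<ge> 1\<close> show False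
    by simp
qed

definition orbit_equiv :: "real \<Rightarrow> real \<Rightarrow> real \<Rightarrow> bool" where
  "orbit_equiv a x y \<longleftrightarrow> (\<forall>k\<in>Kset a. orb a k \<le> x \<longleftrightarrow> orb a k \<le> y)"

lemma orbit_equiv_sym: "orbit_equiv a x y \<Longrightarrow> orbit_equiv a y x"
  by (auto simp: orbit_equiv_def)

lemma orbit_equiv_nonneg_iff: "orbit_equiv a x y \<Longrightarrow> 0 \<le> x \<longleftrightarrow> 0 \<le> y"
  by (metis orbit_equiv_def Kset_0 orb_0)

lemma Uplus_less_if_orbit_between:
  assumes "f \<in> Uplus a" "k \<in> Kset a" "x < orb a k" "orb a k \<le> y"
  shows "f x < f y"
proof -
  obtain u where pos: "\<forall>k\<in>Kset a. u k > 0" and summable: "u summable_on Kset a"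
    and f: "\<And>x. f x = (\<Sum>\<^sub>\<infinity>k\<in>Kset a. if x \<ge> orb a k then u k else 0)"
    using assms(1) by (auto simp: Uplus_def)
  have step_summable: "(\<lambda>k. if z \<ge> orb a k then u k else 0) summable_on Kset a" for z
    by (rule summable_on_comparison_test[OF summable]) (use pos in auto)
  show ?thesis
    unfolding f
    by (rule has_sum_strict_mono[OF has_sum_infsum[OF step_summable]
          has_sum_infsum[OF step_summable] _ assms(2)])
       (use assms(2-) pos in auto)
qed

lemma Uplus_eq_iff_orbit_equiv:
  assumes "f \<in> Uplus a"
  shows "f x = f y \<longleftrightarrow> orbit_equiv a x y"
proof
  assume "f x = f y"
  then show "orbit_equiv a x y"
    using Uplus_less_if_orbit_between[OF assms, of _ x y]
      Uplus_less_if_orbit_between[OF assms, of _ y x]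
    by (force simp: orbit_equiv_def not_le)
next
  assume "orbit_equiv a x y"
  moreover obtain u where "\<And>x. f x = (\<Sum>\<^sub>\<infinity>k\<in>Kset a. if x \<ge> orb a k then u k else 0)"
    using assms by (auto simp: Uplus_def)
  ultimately show "f x = f y"
    by (auto simp: orbit_equiv_def intro: infsum_cong)
qed

lemma orbit_equiv_affine_plus:
  assumes "0 < a" "a < 1" "orbit_equiv a x y" "0 \<le> x" "k \<in> Kset a" "orb a k \<le> a*y + 1"
  shows "orb a k \<le> a*x + 1"
proof (rule ccontr)
  assume not_le: "\<not> orb a k \<le> a*x + 1"
  let ?d = "orb a k"
  have "?d > 1"
    using not_le assms by (smt (verit) mult_nonneg_nonneg)
  then have "Suc k \<in> Kset a"
    using assms(5) by (simp add: Kset_Suc Iint_def)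
  moreover have "orb a (Suc k) = (?d - 1)/a"
    using \<open>?d > 1\<close> orb_bounds[OF assms(1,2,5)] by (simp add: orb_Suc Tmap_right_branch)
  moreover have "(?d - 1)/a \<le> y" "\<not> (?d - 1)/a \<le> x"
    using assms(1,6) not_le by (simp_all add: divide_le_eq mult.commute)
  ultimately show False
    using assms(3) by (auto simp: orbit_equiv_def)
qed

lemma orbit_equiv_affine_minus:
  assumes "0 < a" "a \<le> 2/3" "orbit_equiv a x y" "y \<le> 1/(1 - a)" "k \<in> Kset a"
    "orb a k \<le> a*y - 1"
  shows "orb a k \<le> a*x - 1"
proof (rule ccontr)
  assume not_le: "\<not> orb a k \<le> a*x - 1"
  let ?d = "orb a k"
  have "?d + 1 \<le> a/(1 - a)"
    using assms(6) mult_left_mono[OF assms(4), of a] assms(1) by simp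
  also have "a/(1 - a) = (2*a - 1)/(1 - a) + 1"
    using assms(1,2) by (simp add: field_simps)
  finally have left: "?d \<le> (2*a - 1)/(1 - a)"
    by simp
  have "?d < 1"
  proof (rule ccontr)
    assume "\<not> ?d < 1"
    moreover have "(2*a - 1)/(1 - a) \<le> 1"
      using assms(2) by (simp add: divide_le_eq)
    ultimately have "?d = 1" "(2*a - 1)/(1 - a) = 1"
      using left by linarith+
    then have "a = 2/3"
      using assms(2) by (simp add: divide_eq_eq)
    with \<open>?d = 1\<close> show False
      using orb_two_thirds_ne_1 by metis
  qed
  then have "Suc k \<in> Kset a"
    using assms(5) left by (simp add: Kset_Suc Iint_def)
  moreover have "orb a (Suc k) = (?d + 1)/a"
    using \<open>?d < 1\<close> left orb_bounds[OF assms(1) _ assms(5)] assms(2)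
    by (simp add: orb_Suc Tmap_left_branch)
  moreover have "(?d + 1)/a \<le> y" "\<not> (?d + 1)/a \<le> x"
    using assms(1,6) not_le by (simp_all add: divide_le_eq mult.commute)
  ultimately show False
    using assms(3) by (auto simp: orbit_equiv_def)
qed

lemma orbit_equiv_affine:
  assumes "0 < a" "a \<le> 2/3" "orbit_equiv a x y" "x \<in> {0..1/(1 - a)}" "y \<in> {0..1/(1 - a)}"
    "e \<in> {1, -1}"
  shows "orbit_equiv a (a*x + e) (a*y + e)"
proof -
  have "a < 1"
    using assms(2) by simp
  note equiv_yx = orbit_equiv_sym[OF assms(3)]
  show ?thesis
    using assms(4-6)
      orbit_equiv_affine_plus[OF assms(1) \<open>a < 1\<close> assms(3)]
      orbit_equiv_affine_plus[OF assms(1) \<open>a < 1\<close> equiv_yx]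
      orbit_equiv_affine_minus[OF assms(1,2,3)] orbit_equiv_affine_minus[OF assms(1,2) equiv_yx]
    by (auto simp: orbit_equiv_def)
qed

lemma chain_le:
  assumes "0 \<le> a" "a < 1" "\<And>n. xi n \<le> 1" "x \<le> 1/(1 - a)"
  shows "chain a xi x n \<le> 1/(1 - a)"
proof (induction n)
  case (Suc n)
  have "a * chain a xi x n + xi (Suc n) \<le> a * (1/(1 - a)) + 1"
    using mult_left_mono[OF Suc.IH assms(1)] assms(3)[of "Suc n"] by simp
  also have "\<dots> = 1/(1 - a)"
    using assms(2) by (simp add: field_simps)
  finally show ?case
    by simp
qed (use assms in simp)

lemma orbit_equiv_chain:
  assumes "0 < a" "a \<le> 2/3" "\<And>n. xi n \<in> {1, -1}"
    "x \<in> {0..1/(1 - a)}" "y \<in> {0..1/(1 - a)}" "orbit_equiv a x y"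
    "\<forall>m<n. 0 \<le> chain a xi x m"
  shows "orbit_equiv a (chain a xi x n) (chain a xi y n)"
  using assms(7)
proof (induction n)
  case (Suc n)
  then have equiv: "orbit_equiv a (chain a xi x n) (chain a xi y n)"
    and x_nonneg: "0 \<le> chain a xi x n"
    by auto
  have y_nonneg: "0 \<le> chain a xi y n"
    using orbit_equiv_nonneg_iff[OF equiv] x_nonneg by simp
  have "xi m \<le> 1" for m
    using assms(3)[of m] by auto
  then have "chain a xi z n \<le> 1/(1 - a)" if "z \<le> 1/(1 - a)" for z
    using chain_le[of a xi z n] assms(1,2) that by simp
  with x_nonneg y_nonneg assms(4,5) show ?case
    using orbit_equiv_affine[OF assms(1,2) equiv _ _ assms(3)] by simp
qed (use assms(6) in simp)

lemma hit_time_eq_enat_iff: "hit_time X = enat n \<longleftrightarrow> X n < 0 \<and> (\<forall>m<n. 0 \<le> X m)"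
proof
  assume hit: "hit_time X = enat n"
  then have "\<exists>n. X n < 0"
    by (auto simp: hit_time_def split: if_splits)
  with hit show "X n < 0 \<and> (\<forall>m<n. 0 \<le> X m)"
    by (metis hit_time_def LeastI_ex not_less_Least not_le enat.inject)
next
  assume "X n < 0 \<and> (\<forall>m<n. 0 \<le> X m)"
  then have "(LEAST n. X n < 0) = n"
    by (intro Least_equality) (auto simp: not_less[symmetric])
  with \<open>X n < 0 \<and> _\<close> show "hit_time X = enat n"
    by (auto simp: hit_time_def)
qed

lemma hit_time_eq_infinity_iff: "hit_time X = \<infinity> \<longleftrightarrow> (\<forall>n. 0 \<le> X n)"
  by (simp add: hit_time_def) (meson not_less)

lemma hit_time_cong:
  assumes "\<And>n. \<forall>m<n. 0 \<le> X m \<Longrightarrow> 0 \<le> X n \<longleftrightarrow> 0 \<le> Y n"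
  shows "hit_time X = hit_time Y"
proof -
  have prefix: "(\<forall>m<n. 0 \<le> X m) \<longleftrightarrow> (\<forall>m<n. 0 \<le> Y m)" for n
    by (induction n) (use assms in \<open>auto simp: less_Suc_eq\<close>)
  show ?thesis
  proof (cases "hit_time X")
    case (enat n)
    then have "X n < 0" "\<forall>m<n. 0 \<le> X m"
      by (simp_all add: hit_time_eq_enat_iff)
    then have "hit_time Y = enat n"
      using assms[of n] prefix[of n] by (simp add: hit_time_eq_enat_iff not_le)
    with enat show ?thesis
      by simp
  next
    case infinity
    then have "0 \<le> Y n" for n
      using prefix[of "Suc n"] by (simp add: hit_time_eq_infinity_iff)
    then have "hit_time Y = \<infinity>"
      by (simp add: hit_time_eq_infinity_iff)
    with infinity show ?thesis
      by simp
  qed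
qed

lemma nonneg_before_stopping:
  assumes "j < the_enat (min (enat n) (hit_time X))"
  shows "0 \<le> X j"
proof (cases "hit_time X")
  case (enat t)
  with assms show ?thesis
    by (simp add: hit_time_eq_enat_iff)
next
  case infinity
  then show ?thesis
    by (simp add: hit_time_eq_infinity_iff)
qed

theorem proposition2p3:
  fixes a :: real and f :: "real \<Rightarrow> real" and xi :: "nat \<Rightarrow> real" and x y :: real
  assumes "0 < a" "a \<le> 2/3"
    and "f \<in> Uplus a"
    and "\<And>n. xi n \<in> {1, -1}"
    and "x \<in> {0 .. 1/(1 - a)}" "y \<in> {0 .. 1/(1 - a)}"
    and "f x = f y"
  shows "hit_time (chain a xi x) = hit_time (chain a xi y) \<and>
         (\<forall>n\<ge>1. f (stopped (chain a xi x) n) = f (stopped (chain a xi y) n))"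
proof -
  let ?X = "chain a xi x" and ?Y = "chain a xi y"
  have "orbit_equiv a x y"
    using assms(7) Uplus_eq_iff_orbit_equiv[OF assms(3)] by simp
  have equiv: "orbit_equiv a (?X n) (?Y n)" if "\<forall>m<n. 0 \<le> ?X m" for n
    by (rule orbit_equiv_chain[OF assms(1,2,4,5,6) \<open>orbit_equiv a x y\<close> that])
  have hit: "hit_time ?X = hit_time ?Y"
    by (rule hit_time_cong, rule orbit_equiv_nonneg_iff, rule equiv)
  have "f (stopped ?X n) = f (stopped ?Y n)" for n
  proof -
    define m where "m = the_enat (min (enat n) (hit_time ?X))"
    have "\<forall>j<m. 0 \<le> ?X j"
      unfolding m_def using nonneg_before_stopping by blast
    then have "orbit_equiv a (?X m) (?Y m)"
      by (rule equiv)
    then show ?thesis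
      using Uplus_eq_iff_orbit_equiv[OF assms(3)] hit by (simp add: stopped_def m_def)
  qed
  with hit show ?thesis
    by blast
qed

end
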